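(* Let $\ddot q\in L^{1,2}_a(\Omega_\delta\times\Omega_\delta)$ with $\ddot q\not\equiv0$. Then the problem $\min_{\kappa_0\in\mathbb{A}^0_\delta}\hat I(\ddot\kappa_0;\ddot q)$, where $\ddot\kappa_0$ is defined by $2\ddot\kappa_0^{-1}(x,x')=\kappa_0^{-1}(x)+\kappa_0^{-1}(x')$, admits an optimal solution given pointwise by $\hat\kappa_0(x)=\hat c_\delta\big[\int_{\Omega_\delta}|\ddot q(x,x')|^2dx'\big]^{1/2}$, where $\hat c_\delta=|\Omega_\delta|\,\|\ddot q\|^{-1}_{L^{1,2}(\Omega_\delta\times\Omega_\delta)}$.
   Context: $\Omega_\delta\subset\mathbb{R}^n$ is a bounded open set. $L^{1,2}(\Omega_\delta\times\Omega_\delta)$ is the mixed-norm space with norm $\|\ddot q\|_{L^{1,2}}=\int_{\Omega_\delta}(\int_{\Omega_\delta}|\ddot q(x,x')|^2dx')^{1/2}dx$; $L^{1,2}_a$ is its subspace of antisymmetric functions ($\ddot q(x,x')=-\ddot q(x',x)$ a.e.). $\mathbb{A}^0_\delta=\{\kappa_0\in L^1(\Omega_\delta):\kappa_0\ge0\text{ a.e.},\ \int_{\Omega_\delta}\kappa_0\le|\Omega_\delta|\}$. $\hat I(\ddot\kappa;\ddot q)=\frac12\int_{\Omega_\delta}\int_{\Omega_\delta}\ddot\kappa^{-1}(x,x')\ddot q(x,x')^2\,dx\,dx'$, with $\kappa_0^{-1}=+\infty$ where $\kappa_0=0$ and the convention $(+\infty)\cdot0=0$. *)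

theory Defs
  imports "HOL-Analysis.Analysis"
begin

abbreviation dom_meas :: "'a::euclidean_space set \<Rightarrow> 'a measure" where
  "dom_meas \<Omega> \<equiv> lebesgue_on \<Omega>"

abbreviation dom2_meas :: "'a::euclidean_space set \<Rightarrow> ('a \<times> 'a) measure" where
  "dom2_meas \<Omega> \<equiv> lebesgue_on \<Omega> \<Otimes>\<^sub>M lebesgue_on \<Omega>"

definition row_norm :: "'a::euclidean_space set \<Rightarrow> ('a \<times> 'a \<Rightarrow> real) \<Rightarrow> 'a \<Rightarrow> real" where
  "row_norm \<Omega> q x = sqrt (\<integral>x'. (q (x, x'))\<^sup>2 \<partial>dom_meas \<Omega>)"

definition in_L12 :: "'a::euclidean_space set \<Rightarrow> ('a \<times> 'a \<Rightarrow> real) \<Rightarrow> bool" where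
  "in_L12 \<Omega> q \<longleftrightarrow> q \<in> borel_measurable (dom2_meas \<Omega>)
     \<and> (AE x in dom_meas \<Omega>. integrable (dom_meas \<Omega>) (\<lambda>x'. (q (x, x'))\<^sup>2))
     \<and> integrable (dom_meas \<Omega>) (row_norm \<Omega> q)"

definition L12_norm :: "'a::euclidean_space set \<Rightarrow> ('a \<times> 'a \<Rightarrow> real) \<Rightarrow> real" where
  "L12_norm \<Omega> q = (\<integral>x. row_norm \<Omega> q x \<partial>dom_meas \<Omega>)"

definition in_L12a :: "'a::euclidean_space set \<Rightarrow> ('a \<times> 'a \<Rightarrow> real) \<Rightarrow> bool" where
  "in_L12a \<Omega> q \<longleftrightarrow> in_L12 \<Omega> q \<and> (AE z in dom2_meas \<Omega>. q (fst z, snd z) = - q (snd z, fst z))"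

definition adm0 :: "'a::euclidean_space set \<Rightarrow> ('a \<Rightarrow> real) set" where
  "adm0 \<Omega> = {\<kappa>0. integrable (dom_meas \<Omega>) \<kappa>0 \<and> (AE x in dom_meas \<Omega>. \<kappa>0 x \<ge> 0)
                 \<and> (\<integral>x. \<kappa>0 x \<partial>dom_meas \<Omega>) \<le> measure lebesgue \<Omega>}"

text \<open>Inverse of kappa0 in [0,\<infinity>], with inverse 0 = \<infinity>; ennreal arithmetic has \<infinity> * 0 = 0.\<close>
definition kinv :: "('a \<Rightarrow> real) \<Rightarrow> 'a \<Rightarrow> ennreal" where
  "kinv \<kappa>0 x = inverse (ennreal (\<kappa>0 x))"

definition kdd_inv :: "('a \<Rightarrow> real) \<Rightarrow> 'a \<times> 'a \<Rightarrow> ennreal" where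
  "kdd_inv \<kappa>0 z = (kinv \<kappa>0 (fst z) + kinv \<kappa>0 (snd z)) / 2"

definition I_hat :: "'a::euclidean_space set \<Rightarrow> ('a \<times> 'a \<Rightarrow> ennreal) \<Rightarrow> ('a \<times> 'a \<Rightarrow> real) \<Rightarrow> ennreal" where
  "I_hat \<Omega> kinvdd q = (\<integral>\<^sup>+ z. (1/2) * kinvdd z * ennreal ((q z)\<^sup>2) \<partial>dom2_meas \<Omega>)"

end

theory Submission
  imports Defs
begin

(* Since q is antisymmetric, q^2 is symmetric, so both halves of the two-point weight
   contribute equally and I_hat(kdd_inv k; q) = 1/2 \<integral> r^2 / k, where r is the row norm of q.
   Pointwise AM-GM gives r^2 / k + k / c^2 \<ge> 2 r / c, with equality iff k = c r.  Integrating
   and using \<integral> k \<le> |\<Omega>| bounds \<integral> r^2 / k from below by 2 \<parallel>q\<parallel> / c - |\<Omega>| / c^2; for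
   c = |\<Omega>| / \<parallel>q\<parallel> this is \<parallel>q\<parallel>^2 / |\<Omega>|, which is exactly the value attained by k = c r. *)

lemma ennreal_le_of_double_le_add:
  fixes a :: real
  assumes "ennreal (2 * a) \<le> x + ennreal a"
  shows "ennreal a \<le> x"
proof (cases x)
  case (real y)
  show ?thesis
  proof (cases "a \<le> 0")
    case False
    then have "ennreal (2 * a) \<le> ennreal (y + a)"
      using assms real by simp
    then have "2 * a \<le> y + a"
      using False real ennreal_le_iff[of "y + a" "2 * a"] by linarith
    then show ?thesis using real by (simp add: ennreal_leI)
  qed (simp add: ennreal_neg)
qed simp

lemma ennreal_amgm_inverse:
  fixes r c k :: real
  assumes "r \<ge> 0" "c > 0"
  shows "ennreal (2 * r / c) \<le> inverse (ennreal k) * ennreal (r\<^sup>2) + ennreal (k / c\<^sup>2)"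
proof (cases "r > 0 \<and> k > 0")
  case True
  have "2 * r / c \<le> r\<^sup>2 / k + k / c\<^sup>2"
  proof -
    have "r\<^sup>2 / k + k / c\<^sup>2 - 2 * r / c = (r * c - k)\<^sup>2 / (k * c\<^sup>2)"
      using True assms by (simp add: field_simps power2_eq_square)
    moreover have "(r * c - k)\<^sup>2 / (k * c\<^sup>2) \<ge> 0" using True by simp
    ultimately show ?thesis by linarith
  qed
  moreover have "inverse (ennreal k) * ennreal (r\<^sup>2) + ennreal (k / c\<^sup>2) = ennreal (r\<^sup>2 / k + k / c\<^sup>2)"
    using True assms by (simp add: inverse_ennreal divide_inverse ennreal_mult' mult.commute)
  ultimately show ?thesis by (simp add: ennreal_leI)
next
  case False
  \<comment> \<open>For \<open>k \<le> 0\<close> the inverse is \<open>\<infinity>\<close>, which beats \<open>2 r / c\<close> unless \<open>r = 0\<close>, where \<open>\<infinity> * 0 = 0\<close>.\<close>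
  then consider "r = 0" | "r > 0" "k \<le> 0" using assms(1) by linarith
  then show ?thesis
  proof cases
    case 2
    then show ?thesis by (simp add: ennreal_neg ennreal_mult_top)
  qed simp
qed

lemma inverse_ennreal_scaled_mult_square:
  fixes r c :: real
  assumes "r \<ge> 0" "c > 0"
  shows "inverse (ennreal (c * r)) * ennreal (r\<^sup>2) = ennreal (r / c)"
proof (cases "r = 0")
  case False
  then have "r > 0" using assms by simp
  then show ?thesis using assms
    by (simp add: inverse_ennreal ennreal_mult[symmetric] field_simps power2_eq_square)
qed simp

lemma nn_integral_inverse_weight_lower_bound:
  fixes r \<kappa> :: "'a \<Rightarrow> real" and c :: real
  assumes r: "integrable M r" "\<And>x. r x \<ge> 0"
    and \<kappa>: "integrable M \<kappa>" "AE x in M. \<kappa> x \<ge> 0"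
    and "c > 0"
  shows "ennreal (2 * (\<integral>x. r x \<partial>M) / c)
      \<le> (\<integral>\<^sup>+ x. inverse (ennreal (\<kappa> x)) * ennreal ((r x)\<^sup>2) \<partial>M) + ennreal ((\<integral>x. \<kappa> x \<partial>M) / c\<^sup>2)"
proof -
  have [measurable]: "r \<in> borel_measurable M" "\<kappa> \<in> borel_measurable M"
    using r(1) \<kappa>(1) by auto
  have "ennreal (2 * (\<integral>x. r x \<partial>M) / c) = (\<integral>\<^sup>+ x. ennreal (2 * r x / c) \<partial>M)"
    using r \<open>c > 0\<close> by (simp add: nn_integral_eq_integral)
  also have "\<dots> \<le> (\<integral>\<^sup>+ x. inverse (ennreal (\<kappa> x)) * ennreal ((r x)\<^sup>2) + ennreal (\<kappa> x / c\<^sup>2) \<partial>M)"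
    using r(2) \<open>c > 0\<close> by (intro nn_integral_mono ennreal_amgm_inverse)
  also have "\<dots> = (\<integral>\<^sup>+ x. inverse (ennreal (\<kappa> x)) * ennreal ((r x)\<^sup>2) \<partial>M) + (\<integral>\<^sup>+ x. ennreal (\<kappa> x / c\<^sup>2) \<partial>M)"
    by (intro nn_integral_add) measurable
  also have "(\<integral>\<^sup>+ x. ennreal (\<kappa> x / c\<^sup>2) \<partial>M) = ennreal (\<integral>x. \<kappa> x / c\<^sup>2 \<partial>M)"
    using \<kappa> by (intro nn_integral_eq_integral) auto
  also have "(\<integral>x. \<kappa> x / c\<^sup>2 \<partial>M) = (\<integral>x. \<kappa> x \<partial>M) / c\<^sup>2"
    by simp
  finally show ?thesis .
qed

lemma nn_integral_inverse_weight_proportional: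
  fixes r :: "'a \<Rightarrow> real" and c :: real
  assumes "integrable M r" "\<And>x. r x \<ge> 0" "c > 0"
  shows "(\<integral>\<^sup>+ x. inverse (ennreal (c * r x)) * ennreal ((r x)\<^sup>2) \<partial>M) = ennreal ((\<integral>x. r x \<partial>M) / c)"
proof -
  have "(\<integral>\<^sup>+ x. inverse (ennreal (c * r x)) * ennreal ((r x)\<^sup>2) \<partial>M) = (\<integral>\<^sup>+ x. ennreal (r x / c) \<partial>M)"
    using assms by (simp add: inverse_ennreal_scaled_mult_square)
  also have "\<dots> = ennreal ((\<integral>x. r x \<partial>M) / c)"
    using assms by (simp add: nn_integral_eq_integral)
  finally show ?thesis .
qed

lemma nn_integral_inverse_weight_minimal:
  fixes r \<kappa> :: "'a \<Rightarrow> real" and m :: real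
  assumes r: "integrable M r" "\<And>x. r x \<ge> 0" "(\<integral>x. r x \<partial>M) > 0"
    and \<kappa>: "integrable M \<kappa>" "AE x in M. \<kappa> x \<ge> 0" "(\<integral>x. \<kappa> x \<partial>M) \<le> m"
    and "m > 0"
  shows "(\<integral>\<^sup>+ x. inverse (ennreal (m / (\<integral>x. r x \<partial>M) * r x)) * ennreal ((r x)\<^sup>2) \<partial>M)
      \<le> (\<integral>\<^sup>+ x. inverse (ennreal (\<kappa> x)) * ennreal ((r x)\<^sup>2) \<partial>M)"
proof -
  define L where "L = (\<integral>x. r x \<partial>M)"
  define c where "c = m / L"
  \<comment> \<open>chosen so that the weight \<open>c * r\<close> is the AM-GM equality case\<close>
  have "c > 0" using r(3) \<open>m > 0\<close> by (simp add: c_def L_def)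
  have "ennreal (2 * (L\<^sup>2 / m)) = ennreal (2 * L / c)"
    using r(3) by (simp add: c_def L_def power2_eq_square mult.assoc)
  also have "\<dots> \<le> (\<integral>\<^sup>+ x. inverse (ennreal (\<kappa> x)) * ennreal ((r x)\<^sup>2) \<partial>M) + ennreal ((\<integral>x. \<kappa> x \<partial>M) / c\<^sup>2)"
    unfolding L_def using r(1,2) \<kappa>(1,2) \<open>c > 0\<close> by (rule nn_integral_inverse_weight_lower_bound)
  also have "ennreal ((\<integral>x. \<kappa> x \<partial>M) / c\<^sup>2) \<le> ennreal (L\<^sup>2 / m)"
  proof (rule ennreal_leI)
    have "(\<integral>x. \<kappa> x \<partial>M) / c\<^sup>2 \<le> m / c\<^sup>2"
      using \<kappa>(3) \<open>c > 0\<close> by (simp add: divide_right_mono)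
    also have "\<dots> = L\<^sup>2 / m"
      using r(3) \<open>m > 0\<close> by (simp add: c_def L_def field_simps power2_eq_square)
    finally show "(\<integral>x. \<kappa> x \<partial>M) / c\<^sup>2 \<le> L\<^sup>2 / m" .
  qed
  finally have "ennreal (2 * (L\<^sup>2 / m))
      \<le> (\<integral>\<^sup>+ x. inverse (ennreal (\<kappa> x)) * ennreal ((r x)\<^sup>2) \<partial>M) + ennreal (L\<^sup>2 / m)"
    by (simp add: add_left_mono)
  then have "ennreal (L\<^sup>2 / m) \<le> (\<integral>\<^sup>+ x. inverse (ennreal (\<kappa> x)) * ennreal ((r x)\<^sup>2) \<partial>M)"
    by (rule ennreal_le_of_double_le_add)
  moreover have "ennreal (L\<^sup>2 / m) = ennreal (L / c)"
    using r(3) by (simp add: c_def L_def power2_eq_square)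
  ultimately show ?thesis
    using nn_integral_inverse_weight_proportional[OF r(1,2) \<open>c > 0\<close>] by (simp add: c_def L_def)
qed

lemma nn_integral_pair_average_weight:
  fixes f :: "'a \<times> 'a \<Rightarrow> ennreal" and k :: "'a \<Rightarrow> ennreal"
  assumes "sigma_finite_measure M"
    and [measurable]: "f \<in> borel_measurable (M \<Otimes>\<^sub>M M)"
    and [measurable]: "k \<in> borel_measurable M"
    and sym: "AE z in M \<Otimes>\<^sub>M M. f (snd z, fst z) = f z"
  shows "(\<integral>\<^sup>+ z. (k (fst z) + k (snd z)) / 2 * f z \<partial>(M \<Otimes>\<^sub>M M))
       = (\<integral>\<^sup>+ x. k x * (\<integral>\<^sup>+ y. f (x, y) \<partial>M) \<partial>M)"
proof -
  interpret M: sigma_finite_measure M by fact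
  interpret P: pair_sigma_finite M M ..
  have kf: "(\<lambda>z. k (fst z) * f z) \<in> borel_measurable (M \<Otimes>\<^sub>M M)"
    and kf_swap: "(\<lambda>z. k (snd z) * f (snd z, fst z)) \<in> borel_measurable (M \<Otimes>\<^sub>M M)"
    by measurable
  have first: "(\<integral>\<^sup>+ z. k (fst z) * f z \<partial>(M \<Otimes>\<^sub>M M)) = (\<integral>\<^sup>+ x. k x * (\<integral>\<^sup>+ y. f (x, y) \<partial>M) \<partial>M)"
  proof -
    have "(\<integral>\<^sup>+ z. k (fst z) * f z \<partial>(M \<Otimes>\<^sub>M M)) = (\<integral>\<^sup>+ x. \<integral>\<^sup>+ y. k x * f (x, y) \<partial>M \<partial>M)"
      using M.nn_integral_fst[OF kf] by simp
    also have "\<dots> = (\<integral>\<^sup>+ x. k x * (\<integral>\<^sup>+ y. f (x, y) \<partial>M) \<partial>M)"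
      by (intro nn_integral_cong nn_integral_cmult) measurable
    finally show ?thesis .
  qed
  have second: "(\<integral>\<^sup>+ z. k (snd z) * f z \<partial>(M \<Otimes>\<^sub>M M)) = (\<integral>\<^sup>+ z. k (fst z) * f z \<partial>(M \<Otimes>\<^sub>M M))"
  proof -
    have "(\<integral>\<^sup>+ z. k (snd z) * f z \<partial>(M \<Otimes>\<^sub>M M)) = (\<integral>\<^sup>+ z. k (snd z) * f (snd z, fst z) \<partial>(M \<Otimes>\<^sub>M M))"
      using sym by (intro nn_integral_cong_AE) auto
    also have "\<dots> = (\<integral>\<^sup>+ y. \<integral>\<^sup>+ x. k y * f (y, x) \<partial>M \<partial>M)"
      using P.nn_integral_snd[OF kf_swap] by simp
    also have "\<dots> = (\<integral>\<^sup>+ z. k (fst z) * f z \<partial>(M \<Otimes>\<^sub>M M))"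
      using M.nn_integral_fst[OF kf] by simp
    finally show ?thesis .
  qed
  have "(\<integral>\<^sup>+ z. (k (fst z) + k (snd z)) / 2 * f z \<partial>(M \<Otimes>\<^sub>M M))
      = (\<integral>\<^sup>+ z. (k (fst z) * f z + k (snd z) * f z) / 2 \<partial>(M \<Otimes>\<^sub>M M))"
    by (intro nn_integral_cong) (simp add: divide_ennreal_def algebra_simps)
  also have "\<dots> = ((\<integral>\<^sup>+ z. k (fst z) * f z \<partial>(M \<Otimes>\<^sub>M M)) + (\<integral>\<^sup>+ z. k (snd z) * f z \<partial>(M \<Otimes>\<^sub>M M))) / 2"
    by (simp add: nn_integral_divide nn_integral_add)
  also have "\<dots> = (\<integral>\<^sup>+ z. k (fst z) * f z \<partial>(M \<Otimes>\<^sub>M M))"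
    unfolding second using ennreal_mult_divide_eq[of 2] by (simp flip: mult_2_right)
  finally show ?thesis
    unfolding first .
qed

lemma borel_measurable_kinv [measurable]:
  "\<kappa> \<in> borel_measurable M \<Longrightarrow> kinv \<kappa> \<in> borel_measurable M"
  unfolding kinv_def by measurable

lemma row_norm_nonneg: "row_norm \<Omega> q x \<ge> 0"
  unfolding row_norm_def by (simp add: integral_nonneg_AE)

lemma nn_integral_square_eq_row_norm:
  assumes "integrable (dom_meas \<Omega>) (\<lambda>x'. (q (x, x'))\<^sup>2)"
  shows "(\<integral>\<^sup>+ x'. ennreal ((q (x, x'))\<^sup>2) \<partial>dom_meas \<Omega>) = ennreal ((row_norm \<Omega> q x)\<^sup>2)"
  using assms by (simp add: nn_integral_eq_integral row_norm_def integral_nonneg_AE)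

lemma I_hat_kdd_inv:
  assumes "\<Omega> \<in> lmeasurable" "in_L12a \<Omega> q" "\<kappa> \<in> borel_measurable (dom_meas \<Omega>)"
  shows "I_hat \<Omega> (kdd_inv \<kappa>) q
       = (1/2) * (\<integral>\<^sup>+ x. kinv \<kappa> x * ennreal ((row_norm \<Omega> q x)\<^sup>2) \<partial>dom_meas \<Omega>)"
proof -
  interpret finite_measure "dom_meas \<Omega>"
    using assms(1) by (rule finite_measure_lebesgue_on)
  have [measurable]: "q \<in> borel_measurable (dom2_meas \<Omega>)"
    and rows: "AE x in dom_meas \<Omega>. integrable (dom_meas \<Omega>) (\<lambda>x'. (q (x, x'))\<^sup>2)"
    and anti: "AE z in dom2_meas \<Omega>. q (fst z, snd z) = - q (snd z, fst z)"
    using assms(2) unfolding in_L12a_def in_L12_def by auto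
  have "I_hat \<Omega> (kdd_inv \<kappa>) q
      = (1/2) * (\<integral>\<^sup>+ z. (kinv \<kappa> (fst z) + kinv \<kappa> (snd z)) / 2 * ennreal ((q z)\<^sup>2) \<partial>dom2_meas \<Omega>)"
    unfolding I_hat_def kdd_inv_def using assms(3)
    by (simp add: mult.assoc nn_integral_cmult)
  also have "\<dots> = (1/2) * (\<integral>\<^sup>+ x. kinv \<kappa> x * (\<integral>\<^sup>+ x'. ennreal ((q (x, x'))\<^sup>2) \<partial>dom_meas \<Omega>) \<partial>dom_meas \<Omega>)"
    using anti sigma_finite_measure_axioms assms(3)
    by (subst nn_integral_pair_average_weight) (auto elim!: eventually_mono)
  also have "\<dots> = (1/2) * (\<integral>\<^sup>+ x. kinv \<kappa> x * ennreal ((row_norm \<Omega> q x)\<^sup>2) \<partial>dom_meas \<Omega>)"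
    using rows by (intro arg_cong[where f = "(*) (1/2)"] nn_integral_cong_AE)
      (auto elim!: eventually_mono simp: nn_integral_square_eq_row_norm)
  finally show ?thesis .
qed

lemma L12_norm_pos:
  assumes "\<Omega> \<in> lmeasurable" "in_L12 \<Omega> q" "\<not> (AE z in dom2_meas \<Omega>. q z = 0)"
  shows "L12_norm \<Omega> q > 0"
proof -
  interpret finite_measure "dom_meas \<Omega>"
    using assms(1) by (rule finite_measure_lebesgue_on)
  interpret pair_sigma_finite "dom_meas \<Omega>" "dom_meas \<Omega>" ..
  have [measurable]: "q \<in> borel_measurable (dom2_meas \<Omega>)"
    and rows: "AE x in dom_meas \<Omega>. integrable (dom_meas \<Omega>) (\<lambda>x'. (q (x, x'))\<^sup>2)"
    and r: "integrable (dom_meas \<Omega>) (row_norm \<Omega> q)"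
    using assms(2) unfolding in_L12_def by auto
  have "L12_norm \<Omega> q \<noteq> 0"
  proof
    assume "L12_norm \<Omega> q = 0"
    then have "AE x in dom_meas \<Omega>. row_norm \<Omega> q x = 0"
      using r by (simp add: L12_norm_def integral_nonneg_eq_0_iff_AE row_norm_nonneg)
    then have "AE x in dom_meas \<Omega>. AE x' in dom_meas \<Omega>. q (x, x') = 0"
      using rows
    proof eventually_elim
      case (elim x)
      then have "(\<integral>x'. (q (x, x'))\<^sup>2 \<partial>dom_meas \<Omega>) = 0"
        by (simp add: row_norm_def integral_nonneg_AE)
      then show ?case
        using elim(2) by (simp add: integral_nonneg_eq_0_iff_AE)
    qed
    then have "AE z in dom2_meas \<Omega>. q z = 0"
      by (intro AE_pair_measure) auto
    with assms(3) show False ..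
  qed
  moreover have "L12_norm \<Omega> q \<ge> 0"
    unfolding L12_norm_def by (simp add: integral_nonneg_AE row_norm_nonneg)
  ultimately show ?thesis by simp
qed

lemma L12_norm_pos_imp_measure_pos:
  assumes "\<Omega> \<in> lmeasurable" "L12_norm \<Omega> q > 0"
  shows "measure lebesgue \<Omega> > 0"
proof (rule ccontr)
  assume "\<not> measure lebesgue \<Omega> > 0"
  then have "\<Omega> \<in> null_sets lebesgue"
    using assms(1) by (simp add: null_sets_def emeasure_eq_measure2 order.antisym)
  then have "L12_norm \<Omega> q = 0"
    unfolding L12_norm_def by (rule integral_eq_zero_null_sets)
  with assms(2) show False by simp
qed

lemma scaled_row_norm_in_adm0:
  assumes "in_L12 \<Omega> q" "L12_norm \<Omega> q > 0"
  shows "(\<lambda>x. measure lebesgue \<Omega> / L12_norm \<Omega> q * row_norm \<Omega> q x) \<in> adm0 \<Omega>"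
  using assms unfolding adm0_def in_L12_def
  by (simp add: row_norm_nonneg L12_norm_def[symmetric])

theorem proposition2p10:
  fixes \<Omega> :: "'a::euclidean_space set" and q :: "'a \<times> 'a \<Rightarrow> real"
  assumes "open \<Omega>" and "bounded \<Omega>"
    and "in_L12a \<Omega> q"
    and "\<not> (AE z in dom2_meas \<Omega>. q z = 0)"
  defines "c \<equiv> measure lebesgue \<Omega> / L12_norm \<Omega> q"
  defines "\<kappa>hat \<equiv> (\<lambda>x. c * row_norm \<Omega> q x)"
  shows "\<kappa>hat \<in> adm0 \<Omega> \<and>
         (\<forall>\<kappa>0 \<in> adm0 \<Omega>. I_hat \<Omega> (kdd_inv \<kappa>hat) q \<le> I_hat \<Omega> (kdd_inv \<kappa>0) q)"
proof -
  have \<Omega>: "\<Omega> \<in> lmeasurable"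
    using assms(1,2) by (simp add: lmeasurable_open)
  have q: "in_L12 \<Omega> q"
    using assms(3) by (simp add: in_L12a_def)
  then have r: "integrable (dom_meas \<Omega>) (row_norm \<Omega> q)"
    by (simp add: in_L12_def)
  have L: "L12_norm \<Omega> q > 0"
    using \<Omega> q assms(4) by (rule L12_norm_pos)
  have m: "measure lebesgue \<Omega> > 0"
    using \<Omega> L by (rule L12_norm_pos_imp_measure_pos)
  have "I_hat \<Omega> (kdd_inv \<kappa>hat) q \<le> I_hat \<Omega> (kdd_inv \<kappa>0) q" if "\<kappa>0 \<in> adm0 \<Omega>" for \<kappa>0
  proof -
    have \<kappa>0: "integrable (dom_meas \<Omega>) \<kappa>0" "AE x in dom_meas \<Omega>. \<kappa>0 x \<ge> 0"
      "(\<integral>x. \<kappa>0 x \<partial>dom_meas \<Omega>) \<le> measure lebesgue \<Omega>"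
      using that by (auto simp: adm0_def)
    have "I_hat \<Omega> (kdd_inv \<kappa>hat) q
        = (1/2) * (\<integral>\<^sup>+ x. kinv \<kappa>hat x * ennreal ((row_norm \<Omega> q x)\<^sup>2) \<partial>dom_meas \<Omega>)"
      using \<Omega> assms(3) r by (intro I_hat_kdd_inv) (auto simp: \<kappa>hat_def)
    also have "\<dots> \<le> (1/2) * (\<integral>\<^sup>+ x. kinv \<kappa>0 x * ennreal ((row_norm \<Omega> q x)\<^sup>2) \<partial>dom_meas \<Omega>)"
      using nn_integral_inverse_weight_minimal[OF r row_norm_nonneg _ \<kappa>0 m] L
      unfolding kinv_def \<kappa>hat_def c_def L12_norm_def by (simp add: mult_left_mono)
    also have "\<dots> = I_hat \<Omega> (kdd_inv \<kappa>0) q"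
      using \<Omega> assms(3) \<kappa>0(1) by (intro I_hat_kdd_inv[symmetric]) auto
    finally show ?thesis .
  qed
  moreover have "\<kappa>hat \<in> adm0 \<Omega>"
    using scaled_row_norm_in_adm0[OF q L] by (simp add: \<kappa>hat_def c_def)
  ultimately show ?thesis by blast
qed

end
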